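(* Let $d\ge1$, $\nu_p>0$, and let $p\in\mathcal T^d_{\nu_p}$ be a Student distribution with location $\mu_p\in\mathbb R^d$ and shape $\Sigma_p\in\mathcal S^d_{++}$. Let $\nu>0$ and consider the Student family $\mathcal T^d_\nu$, viewed as the $\lambda$-exponential family with $\lambda=-\frac2{\nu+d}$, sufficient statistic $T(x)=(x,xx^\top)$ and Lebesgue base measure, with associated $\alpha=1+\frac2{\nu+d}$. Then $p$ is $\mathcal T^d_\nu$-compatible if and only if $\nu_p+2\frac{\nu_p+d}{\nu+d}>2$, and the escort $p^{(\alpha)}$ is a Student distribution with $\nu^{(\alpha)}=\nu_p+2\frac{\nu_p+d}{\nu+d}$ degrees of freedom, location $\mu^{(\alpha)}=\mu_p$ and shape $\Sigma^{(\alpha)}=\frac{\nu_p}{\nu^{(\alpha)}}\Sigma_p$.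
   Context: $\mathcal S^d_{++}$ denotes positive definite symmetric $d\times d$ matrices. The Student family $\mathcal T^d_\nu$ consists of densities on $\mathbb R^d$ (w.r.t. Lebesgue) $q_{\mu,\Sigma}(x)=\frac1{Z_\nu}\det(\Sigma)^{-1/2}\big(1+\frac1\nu(x-\mu)^\top\Sigma^{-1}(x-\mu)\big)^{-\frac{\nu+d}2}$ with $\mu\in\mathbb R^d$, $\Sigma\in\mathcal S^d_{++}$ and normalizing constant $Z_\nu$. The escort of a density $p$ with exponent $\alpha>0$ is $p^{(\alpha)}=p^\alpha/\int p^\alpha dx$ (when finite). For the $\lambda$-exponential family with sufficient statistic $T$ (with densities $q_\vartheta(x)=\exp(c_\lambda(\vartheta,T(x))-\varphi_\lambda(\vartheta))$, $c_\lambda(u,v)=\frac1\lambda\log(1+\lambda\langle u,v\rangle)$, support $S_\vartheta=\{x:1+\lambda\langle\vartheta,T(x)\rangle>0\}$), a density $p$ is $\mathcal T^d_\nu$-compatible if for every member $q_\vartheta$, with $p_{|S_\vartheta}=p\mathbf 1_{S_\vartheta}$, one has $\int p_{|S_\vartheta}^\alpha dx\in(0,\infty)$ and $\int T\,p_{|S_\vartheta}^\alpha dx$ finite componentwise; for the Student family all supports equal $\mathbb R^d$. *)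

theory Defs
  imports "HOL-Analysis.Analysis"
begin

text \<open>Dimension d = CARD('n); R^d is real^'n, d x d matrices are real^'n^'n.\<close>

definition pos_def_sym :: "real^'n^'n \<Rightarrow> bool" where
  "pos_def_sym S \<longleftrightarrow> transpose S = S \<and> (\<forall>x::real^'n. x \<noteq> 0 \<longrightarrow> x \<bullet> (S *v x) > 0)"

definition student_kernel :: "real \<Rightarrow> real^'n \<Rightarrow> real^'n^'n \<Rightarrow> real^'n \<Rightarrow> real" where
  "student_kernel \<nu> \<mu> S x =
     (1 + (1/\<nu>) * ((x - \<mu>) \<bullet> (matrix_inv S *v (x - \<mu>)))) powr (-(\<nu> + real CARD('n)) / 2)"

definition student_density :: "real \<Rightarrow> real^'n \<Rightarrow> real^'n^'n \<Rightarrow> real^'n \<Rightarrow> real" where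
  "student_density \<nu> \<mu> S x =
     (1 / integral\<^sup>L lborel (\<lambda>y::real^'n. student_kernel \<nu> 0 (mat 1) y))
     * det S powr (-1/2) * student_kernel \<nu> \<mu> S x"

definition escort :: "real \<Rightarrow> (real^'n \<Rightarrow> real) \<Rightarrow> real^'n \<Rightarrow> real" where
  "escort \<alpha> p x = p x powr \<alpha> / integral\<^sup>L lborel (\<lambda>y. p y powr \<alpha>)"

text \<open>T^d_nu-compatibility: the Student family as lambda-exponential family with
  lambda = -2/(nu+d), T(x) = (x, x x^T), alpha = 1 + 2/(nu+d).  For every member q_theta
  (every mu, positive definite Sigma) with support S_theta (where the member is positive,
  which is all of R^d), the restriction of p to S_theta raised to alpha has integral in (0,inf)
  and all components of T times it are (Lebesgue) integrable.\<close>

definition student_alpha :: "real \<Rightarrow> nat \<Rightarrow> real" where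
  "student_alpha \<nu> d = 1 + 2 / (\<nu> + real d)"

definition student_compatible :: "real \<Rightarrow> (real^'n \<Rightarrow> real) \<Rightarrow> bool" where
  "student_compatible \<nu> p \<longleftrightarrow>
     (\<forall>(\<mu>::real^'n) (S::real^'n^'n). pos_def_sym S \<longrightarrow>
       (let supp = {x. student_density \<nu> \<mu> S x > 0};
            pr = (\<lambda>x. indicator supp x * p x);
            \<alpha> = student_alpha \<nu> CARD('n)
        in integrable lborel (\<lambda>x. pr x powr \<alpha>)
           \<and> integral\<^sup>L lborel (\<lambda>x. pr x powr \<alpha>) > 0
           \<and> (\<forall>i. integrable lborel (\<lambda>x. x $ i * pr x powr \<alpha>))
           \<and> (\<forall>i j. integrable lborel (\<lambda>x. x $ i * x $ j * pr x powr \<alpha>))))"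

end

theory Submission
  imports Defs
begin

text \<open>Raising the Student kernel (1 + Q/\<nu>p) powr (-(\<nu>p + d)/2) to the power
  \<alpha> = 1 + 2/(\<nu> + d) turns the exponent into -(\<nu>\<alpha> + d)/2, and rescaling the shape by
  \<nu>p/\<nu>\<alpha> restores the form 1 + Q'/\<nu>\<alpha>.  So p powr \<alpha> is a constant multiple of a
  Student kernel with \<nu>\<alpha> degrees of freedom, and normalising it gives the claimed Student
  density.  Normalising constants come from the affine substitution x = \<mu> + U y with
  U^T \<Sigma>^-1 U = I, which turns every Student kernel into the standard one at the cost of the
  Jacobian |det U| = sqrt (det \<Sigma>).

  Compatibility asks for integrability of p powr \<alpha> against 1, x and x x^T.  Integrability
  against 1 always holds and against x follows from that against x x^T.  The second moments of
  a Student kernel with \<nu>\<alpha> degrees of freedom are integrable exactly when \<nu>\<alpha> > 2: for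
  \<nu>\<alpha> > 2 they are dominated by a profile (1 + |y|^2/\<nu>) powr (-s) with s > d/2, which is
  bounded by a product of integrable one-dimensional functions; for \<nu>\<alpha> \<le> 2 a dilation
  argument rules out integrability.\<close>

section \<open>Lebesgue measure under invertible linear maps\<close>

lemma matrix_vector_mult_measurable [measurable]:
  "(\<lambda>x. (A::real^'n^'m) *v x) \<in> borel_measurable borel"
  by (intro borel_measurable_continuous_onI linear_continuous_on matrix_vector_mul_bounded_linear)

lemma reindex_measurable [measurable]:
  "(\<lambda>x::real^'n. \<chi> i. x $ e i) \<in> borel_measurable borel"
  by (intro borel_measurable_continuous_onI continuous_on_vec_lambda linear_continuous_on
      bounded_linear_vec_nth)

lemma vec_nth_measurable [measurable]:
  "(\<lambda>x::real^'n. x $ i) \<in> borel_measurable borel"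
  by (intro borel_measurable_continuous_onI linear_continuous_on bounded_linear_vec_nth)

lemma prod_Basis_cart: "(\<Prod>b\<in>Basis. (v::real^'n) \<bullet> b) = (\<Prod>i\<in>UNIV. v $ i)"
  by (simp add: Basis_vec_def cart_eq_inner_axis axis_eq_axis prod.UNION_disjoint)

lemma distr_lborel_reindex:
  fixes e :: "'m::finite \<Rightarrow> 'n::finite"
  assumes e: "bij e"
  shows "distr lborel borel (\<lambda>x::real^'n. \<chi> i. x $ e i) = (lborel :: (real^'m) measure)"
proof (rule lborel_eqI[symmetric])
  fix l u :: "real^'m"
  assume le: "\<And>b. b \<in> Basis \<Longrightarrow> l \<bullet> b \<le> u \<bullet> b"
  let ?inv = "\<lambda>v::real^'m. \<chi> j. v $ inv e j"
  have pre: "(\<lambda>x::real^'n. \<chi> i. x $ e i) -` box l u = box (?inv l) (?inv u)"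
  proof (intro set_eqI iffI)
    fix x :: "real^'n"
    assume "x \<in> (\<lambda>x. \<chi> i. x $ e i) -` box l u"
    then show "x \<in> box (?inv l) (?inv u)"
      using bij_inv_eq_iff[OF e] by (simp add: mem_box_cart) metis
  next
    fix x :: "real^'n"
    assume "x \<in> box (?inv l) (?inv u)"
    then show "x \<in> (\<lambda>x. \<chi> i. x $ e i) -` box l u"
      using bij_inv_eq_iff[OF e] by (simp add: mem_box_cart) metis
  qed
  have "l $ i \<le> u $ i" for i
    using le[of "axis i 1"] by (simp add: inner_axis)
  then have "\<forall>b\<in>Basis. ?inv l \<bullet> b \<le> ?inv u \<bullet> b"
    by (auto simp: Basis_vec_def inner_axis)
  then have "emeasure lborel (box (?inv l) (?inv u)) = (\<Prod>j\<in>UNIV. u $ inv e j - l $ inv e j)"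
    by (simp add: prod_Basis_cart)
  also have "\<dots> = (\<Prod>i\<in>UNIV. u $ i - l $ i)"
    using prod.reindex_bij_betw[OF bij_betw_inv_into[OF e], of "\<lambda>i. u $ i - l $ i"]
    by (simp add: inv_def)
  finally show "emeasure (distr lborel borel (\<lambda>x::real^'n. \<chi> i. x $ e i)) (box l u)
      = (\<Prod>b\<in>Basis. (u - l) \<bullet> b)"
    by (simp add: emeasure_distr pre prod_Basis_cart)
qed simp

lemma det_reindex:
  fixes A :: "'a::comm_ring_1^'n^'n" and e :: "'m::finite \<Rightarrow> 'n"
  assumes e: "bij e"
  shows "det (\<chi> i j. A $ e i $ e j) = det A"
proof -
  have inj: "inj e" and inv: "bij (inv e)"
    using e by (auto simp: bij_is_inj bij_imp_bij_inv)
  show ?thesis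
    unfolding det_def
  proof (rule sum.reindex_bij_witness[where j = "map_permutation UNIV e"
        and i = "map_permutation UNIV (inv e)"])
    fix q :: "'m \<Rightarrow> 'm"
    assume "q \<in> {q. q permutes UNIV}"
    then have q: "q permutes UNIV" by simp
    show "map_permutation UNIV (inv e) (map_permutation UNIV e q) = q"
      by (rule map_permutation_compose_inv[OF e q]) (simp add: inv_f_f[OF inj])
    show "map_permutation UNIV e q \<in> {p. p permutes UNIV}"
      using map_permutation_permutes[OF e q] by simp
    have "(\<Prod>i\<in>UNIV. A $ i $ map_permutation UNIV e q i)
        = (\<Prod>j\<in>UNIV. A $ e j $ map_permutation UNIV e q (e j))"
      using prod.reindex_bij_betw[OF e, of "\<lambda>i. A $ i $ map_permutation UNIV e q i"] by simp
    also have "\<dots> = (\<Prod>j\<in>UNIV. A $ e j $ e (q j))"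
      using map_permutation_apply[OF inj_on_subset[OF inj]] by simp
    finally show "of_int (sign (map_permutation UNIV e q))
          * (\<Prod>i\<in>UNIV. A $ i $ map_permutation UNIV e q i)
        = of_int (sign q) * (\<Prod>j\<in>UNIV. (\<chi> i j. A $ e i $ e j) $ j $ q j)"
      using sign_map_permutation[OF inj q] by simp
  next
    fix p :: "'n \<Rightarrow> 'n"
    assume "p \<in> {p. p permutes UNIV}"
    then have p: "p permutes UNIV" by simp
    show "map_permutation UNIV e (map_permutation UNIV (inv e) p) = p"
      by (rule map_permutation_compose_inv[OF inv p]) (simp add: surj_f_inv_f[OF bij_is_surj[OF e]])
    show "map_permutation UNIV (inv e) p \<in> {q. q permutes UNIV}"
      using map_permutation_permutes[OF inv p] by simp
  qed
qed

lemma lborel_eq_density_matrix_wellorder: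
  fixes A :: "(real^'n::{finite,wellorder})^'n::_"
  assumes "det A \<noteq> 0"
  shows "lborel = density (distr lborel borel (\<lambda>y. A *v y)) (\<lambda>_. ennreal \<bar>det A\<bar>)"
proof (rule lborel_eqI)
  obtain B where AB: "A ** B = mat 1" "B ** A = mat 1"
    using assms invertible_det_nz invertible_def by blast
  have det_AB: "\<bar>det A\<bar> * \<bar>det B\<bar> = 1"
    using arg_cong[OF AB(1), of det] by (simp add: det_mul abs_mult[symmetric])
  fix l u :: "real^'n::_"
  assume le: "\<And>b. b \<in> Basis \<Longrightarrow> l \<bullet> b \<le> u \<bullet> b"
  have pre: "(\<lambda>y. A *v y) -` box l u = (\<lambda>x. B *v x) ` box l u"
    using AB by (force simp: matrix_vector_mul_assoc)
  have "(\<lambda>x. B *v x) ` box l u \<in> sets borel"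
    using measurable_sets[OF matrix_vector_mult_measurable[of A], of "box l u"] by (simp add: pre)
  then have "emeasure lborel ((\<lambda>x. B *v x) ` box l u) = emeasure lebesgue ((\<lambda>x. B *v x) ` box l u)"
    by (simp add: emeasure_completion)
  also have "\<dots> = measure lebesgue ((\<lambda>x. B *v x) ` box l u)"
    using measurable_linear_image[OF matrix_vector_mul_linear[of B] lmeasurable_box]
    by (simp add: emeasure_eq_measure2)
  also have "\<dots> = \<bar>det B\<bar> * (\<Prod>b\<in>Basis. (u - l) \<bullet> b)"
    using measure_linear_image[OF matrix_vector_mul_linear[of B] lmeasurable_box] le
    by (simp add: measure_lborel_box_eq)
  finally have "emeasure lborel ((\<lambda>y. A *v y) -` box l u) = \<bar>det B\<bar> * (\<Prod>b\<in>Basis. (u - l) \<bullet> b)"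
    unfolding pre .
  moreover have "0 \<le> (\<Prod>b\<in>Basis. (u - l) \<bullet> b)"
    using le by (simp add: prod_nonneg inner_diff_left)
  ultimately show "emeasure (density (distr lborel borel (\<lambda>y. A *v y)) (\<lambda>_. ennreal \<bar>det A\<bar>)) (box l u)
      = (\<Prod>b\<in>Basis. (u - l) \<bullet> b)"
    using det_AB
    by (simp add: emeasure_density nn_integral_cmult_indicator emeasure_distr
        ennreal_mult[symmetric] mult.assoc[symmetric])
qed simp

text \<open>The library states measure_linear_image only for well-ordered index types.  A copy of an
  arbitrary finite index type, ordered through to_nat, makes it applicable via reindexing.\<close>

typedef 'a ranked = "UNIV :: 'a set"
  by simp

instance ranked :: (finite) finite
proof
  have "finite (Abs_ranked ` (UNIV :: 'a set))"
    by (rule finite_imageI) simp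
  then show "finite (UNIV :: 'a ranked set)"
    by (simp only: type_definition.Abs_image[OF type_definition_ranked])
qed

instantiation ranked :: (finite) linorder
begin

definition "x \<le> y \<longleftrightarrow> to_nat (Rep_ranked x) \<le> to_nat (Rep_ranked y)"

definition "x < y \<longleftrightarrow> to_nat (Rep_ranked x) < to_nat (Rep_ranked y)"

instance
  by standard (auto simp: less_eq_ranked_def less_ranked_def Rep_ranked_inject[symmetric])

end

instance ranked :: (finite) wellorder
proof
  fix P :: "'a ranked \<Rightarrow> bool" and a
  assume step: "\<And>x. (\<And>y. y < x \<Longrightarrow> P y) \<Longrightarrow> P x"
  show "P a"
  proof (induction a rule: measure_induct_rule[of "\<lambda>x. to_nat (Rep_ranked x)"])
    case (less x)
    show ?case
      by (rule step) (simp add: less_ranked_def less)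
  qed
qed

lemma lborel_eq_density_matrix:
  fixes A :: "real^'n^'n"
  assumes "det A \<noteq> 0"
  shows "lborel = density (distr lborel borel (\<lambda>y. A *v y)) (\<lambda>_. ennreal \<bar>det A\<bar>)"
proof -
  have e: "bij (Rep_ranked :: 'n ranked \<Rightarrow> 'n)"
    by (metis bij_betw_def inj_def Rep_ranked_inject type_definition.Rep_range[OF type_definition_ranked])
  define R :: "real^'n ranked \<Rightarrow> real^'n" where "R y = (\<chi> j. y $ inv Rep_ranked j)" for y
  have R_measurable [measurable]: "R \<in> borel_measurable borel"
    unfolding R_def by measurable
  have R_lborel: "distr lborel borel R = lborel"
    unfolding R_def by (rule distr_lborel_reindex[OF bij_imp_bij_inv[OF e]])
  define B :: "real^'n ranked^'n ranked" where "B = (\<chi> i j. A $ Rep_ranked i $ Rep_ranked j)"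
  have "det B = det A"
    by (simp add: B_def det_reindex e)
  have "R (B *v y) = A *v R y" for y
  proof -
    have "(\<Sum>j\<in>UNIV. A $ k $ Rep_ranked j * y $ j) = (\<Sum>m\<in>UNIV. A $ k $ m * y $ inv Rep_ranked m)" for k
      using sum.reindex_bij_betw[OF e, of "\<lambda>m. A $ k $ m * y $ inv Rep_ranked m"]
      by (simp add: inv_f_f[OF bij_is_inj[OF e]])
    then show ?thesis
      by (simp add: R_def B_def matrix_vector_mult_def vec_eq_iff surj_f_inv_f[OF bij_is_surj[OF e]])
  qed
  then have R_B: "R \<circ> (\<lambda>y. B *v y) = (\<lambda>x. A *v x) \<circ> R"
    by auto
  have "lborel = distr (density (distr lborel borel (\<lambda>y. B *v y)) (\<lambda>_. ennreal \<bar>det A\<bar>)) borel R"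
    using lborel_eq_density_matrix_wellorder[of B] R_lborel assms \<open>det B = det A\<close> by simp
  also have "\<dots> = density (distr (distr lborel borel (\<lambda>y. B *v y)) borel R) (\<lambda>_. ennreal \<bar>det A\<bar>)"
    using density_distr[of "\<lambda>_. ennreal \<bar>det A\<bar>" borel R "distr lborel borel (\<lambda>y. B *v y)"]
    by simp
  also have "\<dots> = density (distr (distr lborel borel R) borel (\<lambda>x. A *v x)) (\<lambda>_. ennreal \<bar>det A\<bar>)"
    by (simp add: distr_distr R_B)
  finally show ?thesis
    unfolding R_lborel .
qed

lemma lborel_eq_density_affine:
  fixes A :: "real^'n^'n"
  assumes "det A \<noteq> 0"
  shows "lborel = density (distr lborel borel (\<lambda>y. c + A *v y)) (\<lambda>_. ennreal \<bar>det A\<bar>)"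
proof -
  have "lborel = distr (density (distr lborel borel (\<lambda>y. A *v y)) (\<lambda>_. ennreal \<bar>det A\<bar>)) borel ((+) c)"
    using lborel_eq_density_matrix[OF assms] lborel_distr_plus[of c] by simp
  also have "\<dots> = density (distr (distr lborel borel (\<lambda>y. A *v y)) borel ((+) c)) (\<lambda>_. ennreal \<bar>det A\<bar>)"
    using density_distr[of "\<lambda>_. ennreal \<bar>det A\<bar>" borel "(+) c" "distr lborel borel (\<lambda>y. A *v y)"]
    by simp
  finally show ?thesis
    by (simp add: distr_distr comp_def)
qed

lemma
  fixes A :: "real^'n^'n" and f :: "real^'n \<Rightarrow> real"
  assumes "det A \<noteq> 0" and f [measurable]: "f \<in> borel_measurable borel"
  shows lborel_integrable_matrix_affine_iff:
      "integrable lborel (\<lambda>y. f (c + A *v y)) \<longleftrightarrow> integrable lborel f"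
    and lborel_integral_matrix_affine:
      "integral\<^sup>L lborel f = \<bar>det A\<bar> * integral\<^sup>L lborel (\<lambda>y. f (c + A *v y))"
proof -
  let ?M = "density (distr lborel borel (\<lambda>y. c + A *v y)) (\<lambda>_. ennreal \<bar>det A\<bar>)"
  have "integrable lborel f \<longleftrightarrow> integrable ?M f"
    using lborel_eq_density_affine[OF assms(1)] by simp
  also have "\<dots> \<longleftrightarrow> integrable lborel (\<lambda>y. \<bar>det A\<bar> *\<^sub>R f (c + A *v y))"
    by (simp add: integrable_density integrable_distr_eq)
  finally show "integrable lborel (\<lambda>y. f (c + A *v y)) \<longleftrightarrow> integrable lborel f"
    using assms(1) by simp
  have "integral\<^sup>L lborel f = integral\<^sup>L ?M f"
    using lborel_eq_density_affine[OF assms(1)] by simp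
  also have "\<dots> = integral\<^sup>L lborel (\<lambda>y. \<bar>det A\<bar> *\<^sub>R f (c + A *v y))"
    by (simp add: integral_density integral_distr)
  finally show "integral\<^sup>L lborel f = \<bar>det A\<bar> * integral\<^sup>L lborel (\<lambda>y. f (c + A *v y))"
    by simp
qed

lemma mat_mult_vector: "(mat c :: real^'n^'n) *v y = c *\<^sub>R y"
proof -
  have "matrix (\<lambda>y. c *\<^sub>R y) *v y = c *\<^sub>R y"
    by (simp add: matrix_works linear_scaleR)
  then show ?thesis
    by (simp add: matrix_scaleR)
qed

lemma det_mat: "det (mat c :: real^'n^'n) = c ^ CARD('n)"
proof -
  have "det (mat c :: real^'n^'n) = (\<Prod>i\<in>UNIV. (mat c :: real^'n^'n) $ i $ i)"
    by (rule det_diagonal) (simp add: mat_def)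
  then show ?thesis
    by (simp add: mat_def)
qed

lemma
  fixes f :: "real^'n \<Rightarrow> real"
  assumes "c \<noteq> 0" and [measurable]: "f \<in> borel_measurable borel"
  shows lborel_integrable_scaleR_iff: "integrable lborel (\<lambda>y. f (c *\<^sub>R y)) \<longleftrightarrow> integrable lborel f"
    and lborel_integral_scaleR: "integral\<^sup>L lborel f = \<bar>c\<bar> ^ CARD('n) * integral\<^sup>L lborel (\<lambda>y. f (c *\<^sub>R y))"
  using lborel_integrable_matrix_affine_iff[of "mat c" f 0] lborel_integral_matrix_affine[of "mat c" f 0] assms
  by (simp_all add: mat_mult_vector det_mat power_abs)

section \<open>Positive definite matrices\<close>

lemma matrix_inv_inverse:
  fixes A :: "'a::semiring_1^'n^'n"
  assumes "invertible A"
  shows "A ** matrix_inv A = mat 1" and "matrix_inv A ** A = mat 1"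
  using someI_ex[OF assms[unfolded invertible_def]] unfolding matrix_inv_def by auto

lemma matrix_inv_unique:
  fixes A B :: "'a::semiring_1^'n^'n"
  assumes "A ** B = mat 1" and "B ** A = mat 1"
  shows "matrix_inv A = B"
proof -
  have "invertible A"
    using assms invertible_def by blast
  have "matrix_inv A = matrix_inv A ** (A ** B)"
    using assms by simp
  also have "\<dots> = B"
    by (simp add: matrix_mul_assoc matrix_inv_inverse[OF \<open>invertible A\<close>])
  finally show ?thesis .
qed

lemma pos_def_sym_invertible:
  assumes "pos_def_sym S"
  shows "invertible S"
proof -
  have "S *v x = 0 \<longrightarrow> x = 0" for x
    using assms unfolding pos_def_sym_def by force
  then obtain B where "B ** S = mat 1"
    using matrix_left_invertible_ker by blast
  then show ?thesis
    using matrix_left_right_inverse invertible_def by blast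
qed

lemma pos_def_sym_matrix_inv:
  assumes S: "pos_def_sym S"
  shows "pos_def_sym (matrix_inv S)"
proof -
  define M where "M = matrix_inv S"
  note SM = matrix_inv_inverse[OF pos_def_sym_invertible[OF S], folded M_def]
  have "transpose S = S"
    using S pos_def_sym_def by blast
  then have "transpose M ** S = mat 1"
    using arg_cong[OF SM(1), of transpose] by (simp add: matrix_transpose_mul)
  then have "transpose M = M"
    by (metis SM(1) matrix_mul_assoc matrix_mul_lid matrix_mul_rid)
  moreover have "x \<bullet> (M *v x) > 0" if "x \<noteq> 0" for x
  proof -
    have "x = S *v (M *v x)"
      using SM by (simp add: matrix_vector_mul_assoc)
    then have "M *v x \<noteq> 0"
      using that by auto
    then have "(M *v x) \<bullet> (S *v (M *v x)) > 0"
      using S pos_def_sym_def by blast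
    then show ?thesis
      using \<open>x = S *v (M *v x)\<close> by (metis inner_commute)
  qed
  ultimately show ?thesis
    unfolding pos_def_sym_def M_def by simp
qed

lemma
  assumes S: "pos_def_sym S" and c: "c > 0"
  shows pos_def_sym_scaleR: "pos_def_sym (c *\<^sub>R S)"
    and matrix_inv_scaleR: "matrix_inv (c *\<^sub>R S) = (1 / c) *\<^sub>R matrix_inv S"
proof -
  show "pos_def_sym (c *\<^sub>R S)"
    using S c by (simp add: pos_def_sym_def transpose_scalar scaleR_matrix_vector_assoc[symmetric])
  show "matrix_inv (c *\<^sub>R S) = (1 / c) *\<^sub>R matrix_inv S"
    using c matrix_inv_inverse[OF pos_def_sym_invertible[OF S]]
    by (intro matrix_inv_unique) (simp_all add: matrix_scalar_ac)
qed

lemma symmetric_matrix_form_commute: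
  fixes M :: "real^'n^'n"
  assumes "transpose M = M"
  shows "x \<bullet> (M *v y) = y \<bullet> (M *v x)"
  by (metis assms dot_lmul_matrix inner_commute vector_transpose_matrix)

definition orthonormal_wrt :: "real^'n^'n \<Rightarrow> (real^'n) set \<Rightarrow> bool" where
  "orthonormal_wrt M B \<longleftrightarrow> (\<forall>x\<in>B. \<forall>y\<in>B. x \<bullet> (M *v y) = (if x = y then 1 else 0))"

lemma orthonormal_wrt_extend:
  fixes M :: "real^'n^'n"
  assumes M: "pos_def_sym M" and "finite B" and "card B < CARD('n)" and B: "orthonormal_wrt M B"
  obtains u where "u \<notin> B" and "orthonormal_wrt M (insert u B)"
proof -
  have sym: "x \<bullet> (M *v y) = y \<bullet> (M *v x)" for x y
    using M symmetric_matrix_form_commute unfolding pos_def_sym_def by blast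
  have "span B \<noteq> UNIV"
    using dim_le_card[of UNIV B] assms(2,3) by auto
  then obtain v where v: "v \<notin> span B"
    by auto
  define w where "w = v - (\<Sum>b\<in>B. (b \<bullet> (M *v v)) *\<^sub>R b)"
  have "(\<Sum>b\<in>B. (b \<bullet> (M *v v)) *\<^sub>R b) \<in> span B"
    by (intro span_sum span_scale span_base)
  then have "w \<noteq> 0"
    using v by (auto simp: w_def)
  define q where "q = w \<bullet> (M *v w)"
  have "q > 0"
    using M \<open>w \<noteq> 0\<close> unfolding q_def pos_def_sym_def by blast
  have w_orth: "b \<bullet> (M *v w) = 0" if "b \<in> B" for b
  proof -
    have "(\<Sum>c\<in>B. (c \<bullet> (M *v v)) * (c \<bullet> (M *v b))) = (\<Sum>c\<in>B. if c = b then c \<bullet> (M *v v) else 0)"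
      using B that unfolding orthonormal_wrt_def by (intro sum.cong) auto
    also have "\<dots> = b \<bullet> (M *v v)"
      using that \<open>finite B\<close> by simp
    finally have "(\<Sum>c\<in>B. (c \<bullet> (M *v v)) * (c \<bullet> (M *v b))) = b \<bullet> (M *v v)" .
    then show ?thesis
      using sym[of b w] sym[of v b]
      by (simp add: w_def inner_diff_left inner_sum_left)
  qed
  define u where "u = (1 / sqrt q) *\<^sub>R w"
  have "u \<bullet> (M *v u) = q / (sqrt q * sqrt q)"
    by (simp add: u_def q_def matrix_vector_mult_scaleR)
  then have uu: "u \<bullet> (M *v u) = 1"
    using \<open>q > 0\<close> by simp
  have ub: "b \<bullet> (M *v u) = 0" "u \<bullet> (M *v b) = 0" if "b \<in> B" for b
    using w_orth[OF that] sym[of u b] by (simp_all add: u_def matrix_vector_mult_scaleR)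
  have "u \<notin> B"
    using ub(1) uu by force
  moreover have "orthonormal_wrt M (insert u B)"
    using B uu ub \<open>u \<notin> B\<close> unfolding orthonormal_wrt_def by auto
  ultimately show ?thesis
    using that by blast
qed

lemma orthonormal_wrt_basis_exists:
  fixes M :: "real^'n^'n"
  assumes "pos_def_sym M"
  obtains B where "finite B" and "card B = CARD('n)" and "orthonormal_wrt M B"
proof -
  have "\<exists>B. finite B \<and> card B = k \<and> orthonormal_wrt M B" if "k \<le> CARD('n)" for k
    using that
  proof (induction k)
    case 0
    show ?case
      by (intro exI[of _ "{}"]) (simp add: orthonormal_wrt_def)
  next
    case (Suc k)
    then obtain B where B: "finite B" "card B = k" "orthonormal_wrt M B"
      by auto
    moreover have "card B < CARD('n)"
      using Suc.prems B(2) by simp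
    ultimately obtain u where "u \<notin> B" "orthonormal_wrt M (insert u B)"
      using orthonormal_wrt_extend[OF assms] by blast
    then show ?case
      using B by (intro exI[of _ "insert u B"]) auto
  qed
  then show ?thesis
    using that by (metis order.refl)
qed

lemma det_congruence_inverse:
  fixes U M S :: "real^'n^'n"
  assumes "transpose U ** (M ** U) = mat 1" and "S ** M = mat 1"
  shows "det U ^ 2 = det S" and "det U \<noteq> 0"
proof -
  have UMU: "det U * (det M * det U) = 1" and SM: "det S * det M = 1"
    using arg_cong[OF assms(1), of det] arg_cong[OF assms(2), of det] by (simp_all add: det_mul)
  have "det U ^ 2 * det M = det U * (det M * det U)"
    by (simp add: power2_eq_square mult_ac)
  then have "det U ^ 2 * det M = det S * det M"
    using UMU SM by simp
  moreover have "det M \<noteq> 0"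
    using SM by auto
  ultimately show "det U ^ 2 = det S"
    by simp
  show "det U \<noteq> 0"
    using UMU by auto
qed

lemma pos_def_sym_whitening:
  fixes S :: "real^'n^'n"
  assumes S: "pos_def_sym S"
  obtains U where "det U \<noteq> 0" and "det U ^ 2 = det S"
    and "\<And>y. (U *v y) \<bullet> (matrix_inv S *v (U *v y)) = y \<bullet> y"
proof -
  define M where "M = matrix_inv S"
  note SM = matrix_inv_inverse[OF pos_def_sym_invertible[OF S], folded M_def]
  obtain B where B: "finite B" "card B = CARD('n)" and orth: "orthonormal_wrt M B"
    using orthonormal_wrt_basis_exists[OF pos_def_sym_matrix_inv[OF S]] unfolding M_def by blast
  obtain e where e: "bij_betw e (UNIV :: 'n set) B"
    using finite_same_card_bij[of "UNIV :: 'n set" B] B by auto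
  define U :: "real^'n^'n" where "U = (\<chi> i j. e j $ i)"
  have G: "transpose U ** (M ** U) = mat 1"
  proof -
    have "(transpose U ** (M ** U)) $ i $ j = e i \<bullet> (M *v e j)" for i j
      by (simp add: U_def matrix_matrix_mult_def transpose_def inner_vec_def matrix_vector_mult_def
          sum_distrib_left mult.assoc)
    moreover have "e i \<in> B" and "e i = e j \<longleftrightarrow> i = j" for i j
      using e unfolding bij_betw_def inj_on_def by auto
    ultimately show ?thesis
      using orth unfolding orthonormal_wrt_def by (simp add: vec_eq_iff mat_def)
  qed
  have "det U ^ 2 = det S" and "det U \<noteq> 0"
    using det_congruence_inverse[OF G SM(1)] by simp_all
  have "(U *v y) \<bullet> (M *v (U *v y)) = y \<bullet> y" for y
  proof -
    have "(U *v y) \<bullet> (M *v (U *v y)) = y \<bullet> (transpose U *v (M *v (U *v y)))"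
      by (metis dot_lmul_matrix vector_transpose_matrix)
    also have "\<dots> = y \<bullet> ((transpose U ** (M ** U)) *v y)"
      by (simp add: matrix_vector_mul_assoc)
    finally show ?thesis
      using G by simp
  qed
  with \<open>det U \<noteq> 0\<close> \<open>det U ^ 2 = det S\<close> show ?thesis
    unfolding M_def by (rule that)
qed

lemma pos_def_sym_det_pos:
  assumes "pos_def_sym S"
  shows "det S > 0"
proof (rule pos_def_sym_whitening[OF assms])
  fix U :: "real^'n^'n"
  assume "det U \<noteq> 0" and "det U ^ 2 = det S"
  then show "det S > 0"
    by (metis zero_less_power2)
qed

section \<open>Integrability estimates\<close>

lemma integral_pos_AE:
  fixes f :: "'a \<Rightarrow> real"
  assumes "integrable M f" and pos: "AE x in M. f x > 0" and "emeasure M (space M) \<noteq> 0"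
  shows "integral\<^sup>L M f > 0"
proof -
  have nonneg: "AE x in M. 0 \<le> f x"
    using pos by eventually_elim simp
  have "integral\<^sup>L M f \<noteq> 0"
  proof
    assume "integral\<^sup>L M f = 0"
    then have "AE x in M. f x = 0"
      using integral_nonneg_eq_0_iff_AE[OF assms(1) nonneg] by simp
    with pos have "AE x in M. False"
      by eventually_elim simp
    then show False
      using assms(3) AE_iff_measurable[of "space M" M "\<lambda>_. False"] by simp
  qed
  moreover have "integral\<^sup>L M f \<ge> 0"
    using nonneg by (rule integral_nonneg_AE)
  ultimately show ?thesis
    by simp
qed

lemma integrable_powr_at_top:
  fixes e :: real
  assumes "e < -1"
  shows "integrable lborel (\<lambda>t::real. indicator {1..} t * t powr e)"
proof -
  have "(\<lambda>x. x powr e) integrable_on {1..}"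
    using has_integral_powr_to_inf[OF assms zero_less_one] has_integral_integrable by blast
  then have "(\<lambda>x. x powr e) absolutely_integrable_on {1..}"
    by (rule nonnegative_absolutely_integrable_1) simp
  then show ?thesis
    by (simp add: set_integrable_def integrable_completion)
qed

lemma integrable_one_plus_square_powr:
  fixes r :: real
  assumes "r > 1/2"
  shows "integrable lborel (\<lambda>t::real. (1 + t^2) powr (-r))"
proof -
  let ?tail = "\<lambda>t::real. indicator {1..} t * t powr (-2*r)"
  define D where "D t = indicator {-1..1} t + ?tail t + ?tail (-t)" for t :: real
  have tail: "integrable lborel ?tail"
    using integrable_powr_at_top[of "-2*r"] assms by simp
  have D_integrable: "integrable lborel D"
    unfolding D_def using tail lborel_integrable_real_affine[OF tail, of "-1" 0]
    by (intro Bochner_Integration.integrable_add) (simp_all add: integrable_real_indicator)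
  have bound: "(1 + t^2) powr (-r) \<le> D t" for t
  proof (cases "\<bar>t\<bar> \<le> 1")
    case True
    have "(1 + t^2) powr (-r) \<le> 1"
      using powr_mono2'[of "-r" 1 "1 + t^2"] assms by simp
    moreover have "indicator {-1..1} t = (1::real)"
      using True by (simp add: abs_le_iff)
    moreover have "0 \<le> ?tail t" and "0 \<le> ?tail (-t)"
      by (simp_all add: indicator_def)
    ultimately show ?thesis
      unfolding D_def by linarith
  next
    case False
    have "(1 + t^2) powr (-r) \<le> (\<bar>t\<bar>^2) powr (-r)"
      using False assms by (intro powr_mono2') auto
    also have "\<dots> = \<bar>t\<bar> powr (-2*r)"
    proof -
      have abs_sq: "\<bar>t\<bar>^2 = \<bar>t\<bar> powr 2"
        using False by (simp add: powr_realpow)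
      show ?thesis
        unfolding abs_sq powr_powr by simp
    qed
    finally show ?thesis
      using False by (auto simp: D_def indicator_def)
  qed
  show ?thesis
  proof (rule Bochner_Integration.integrable_bound[OF D_integrable])
    show "AE t in lborel. norm ((1 + t^2) powr (-r)) \<le> norm (D t)"
      using bound by (intro AE_I2) (simp add: order.trans[OF _ abs_ge_self])
  qed measurable
qed

lemma integrable_prod_Basis:
  fixes h :: "real \<Rightarrow> real"
  assumes h: "integrable lborel h" and h_nonneg: "\<And>t. 0 \<le> h t"
  shows "integrable lborel (\<lambda>y::'a::euclidean_space. \<Prod>b\<in>Basis. h (y \<bullet> b))"
proof -
  have [measurable]: "h \<in> borel_measurable borel"
    using h by simp
  have "(\<integral>\<^sup>+ y. ennreal (norm (\<Prod>b\<in>Basis. h (y \<bullet> b))) \<partial>(lborel :: 'a measure))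
      = (\<integral>\<^sup>+ y. (\<Prod>b\<in>Basis. ennreal (h (y \<bullet> b))) \<partial>(lborel :: 'a measure))"
  proof (rule nn_integral_cong)
    fix y :: 'a
    show "ennreal (norm (\<Prod>b\<in>Basis. h (y \<bullet> b))) = (\<Prod>b\<in>Basis. ennreal (h (y \<bullet> b)))"
      using h_nonneg by (simp add: prod_nonneg prod_ennreal abs_prod)
  qed
  also have "\<dots> = (\<Prod>b\<in>(Basis::'a set). \<integral>\<^sup>+ t. ennreal (h t) \<partial>lborel)"
    by (rule nn_integral_lborel_prod) (auto simp: h_nonneg)
  also have "\<dots> < \<infinity>"
    using h h_nonneg unfolding integrable_iff_bounded
    by (simp add: less_top[symmetric] ennreal_prod_eq_top power_eq_top_ennreal)
  finally show ?thesis
    unfolding integrable_iff_bounded by simp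
qed

lemma one_plus_inner_powr_le_prod:
  fixes y :: "'a::euclidean_space"
  assumes "s \<ge> 0"
  shows "(1 + y \<bullet> y) powr (-s) \<le> (\<Prod>b\<in>Basis. (1 + (y \<bullet> b)^2) powr (-(s / DIM('a))))"
proof -
  have "(\<Prod>b\<in>(Basis::'a set). 1 + (y \<bullet> b)^2) \<le> (\<Prod>b\<in>(Basis::'a set). 1 + y \<bullet> y)"
  proof (rule prod_mono)
    fix b :: 'a
    assume "b \<in> Basis"
    then have "(y \<bullet> b)^2 \<le> (norm y)^2"
      using Basis_le_norm by (metis abs_ge_zero power2_abs power_mono)
    then show "0 \<le> 1 + (y \<bullet> b)^2 \<and> 1 + (y \<bullet> b)^2 \<le> 1 + y \<bullet> y"
      by (simp add: power2_norm_eq_inner)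
  qed
  moreover have "0 < (\<Prod>b\<in>(Basis::'a set). 1 + (y \<bullet> b)^2)"
    by (simp add: prod_pos add_pos_nonneg)
  ultimately have "((1 + y \<bullet> y) ^ DIM('a)) powr (-(s / DIM('a)))
      \<le> (\<Prod>b\<in>(Basis::'a set). 1 + (y \<bullet> b)^2) powr (-(s / DIM('a)))"
    using assms by (intro powr_mono2') auto
  moreover have "((1 + y \<bullet> y) ^ DIM('a)) powr (-(s / DIM('a))) = (1 + y \<bullet> y) powr (-s)"
    by (simp add: powr_realpow[symmetric] powr_powr add_pos_nonneg)
  ultimately show ?thesis
    by (simp add: prod_powr_distrib)
qed

lemma integrable_student_profile:
  fixes \<nu> s :: real
  assumes \<nu>: "\<nu> > 0" and s: "s > DIM('a::euclidean_space) / 2"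
  shows "integrable lborel (\<lambda>y::'a. (1 + (y \<bullet> y) / \<nu>) powr (-s))"
proof -
  define h where "h t = (1 + t^2) powr (-(s / DIM('a)))" for t :: real
  define m where "m = min 1 (1 / \<nu>)"
  have "m > 0"
    using \<nu> by (simp add: m_def)
  have "s / DIM('a) > 1/2"
    using s by (simp add: field_simps)
  then have "integrable lborel (\<lambda>y::'a. \<Prod>b\<in>Basis. h (y \<bullet> b))"
    unfolding h_def by (intro integrable_prod_Basis integrable_one_plus_square_powr) auto
  then have majorant: "integrable lborel (\<lambda>y::'a. m powr (-s) * (\<Prod>b\<in>Basis. h (y \<bullet> b)))"
    by simp
  have bound: "(1 + (y \<bullet> y) / \<nu>) powr (-s) \<le> m powr (-s) * (\<Prod>b\<in>Basis. h (y \<bullet> b))" for y :: 'a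
  proof -
    have "s \<ge> 0"
      using s by (smt (verit) divide_nonneg_nonneg of_nat_0_le_iff)
    have "m * (y \<bullet> y) \<le> (1 / \<nu>) * (y \<bullet> y)"
      by (intro mult_right_mono) (simp_all add: m_def)
    then have "m * (1 + y \<bullet> y) \<le> 1 + (y \<bullet> y) / \<nu>"
      by (simp add: m_def algebra_simps)
    then have "(1 + (y \<bullet> y) / \<nu>) powr (-s) \<le> (m * (1 + y \<bullet> y)) powr (-s)"
      using \<open>m > 0\<close> \<open>s \<ge> 0\<close> by (intro powr_mono2') (auto simp: add_pos_nonneg)
    also have "\<dots> = m powr (-s) * (1 + y \<bullet> y) powr (-s)"
      using \<open>m > 0\<close> by (simp add: powr_mult)
    also have "\<dots> \<le> m powr (-s) * (\<Prod>b\<in>Basis. h (y \<bullet> b))"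
      unfolding h_def by (intro mult_left_mono one_plus_inner_powr_le_prod \<open>s \<ge> 0\<close>) simp
    finally show ?thesis .
  qed
  show ?thesis
  proof (rule Bochner_Integration.integrable_bound[OF majorant])
    show "AE y in lborel. norm ((1 + ((y::'a) \<bullet> y) / \<nu>) powr (-s)) \<le> norm (m powr (-s) * (\<Prod>b\<in>Basis. h (y \<bullet> b)))"
    proof (intro AE_I2)
      fix y :: 'a
      show "norm ((1 + (y \<bullet> y) / \<nu>) powr (-s)) \<le> norm (m powr (-s) * (\<Prod>b\<in>Basis. h (y \<bullet> b)))"
        using bound[of y] abs_ge_self[of "m powr (-s) * (\<Prod>b\<in>Basis. h (y \<bullet> b))"] by simp
    qed
  qed measurable
qed

lemma integrable_first_moment:
  fixes f g :: "'a \<Rightarrow> real"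
  assumes "integrable M f" and "integrable M (\<lambda>x. g x * g x * f x)"
    and [measurable]: "g \<in> borel_measurable M" and "\<And>x. f x \<ge> 0"
  shows "integrable M (\<lambda>x. g x * f x)"
proof (rule Bochner_Integration.integrable_bound)
  show "integrable M (\<lambda>x. f x + g x * g x * f x)"
    using assms(1,2) by simp
  have "norm (g x * f x) \<le> norm (f x + g x * g x * f x)" for x
  proof -
    have "0 \<le> (\<bar>g x\<bar> - 1) * (\<bar>g x\<bar> - 1)"
      by simp
    then have "\<bar>g x\<bar> \<le> 1 + g x * g x"
      by (simp add: algebra_simps abs_mult_self_eq)
    then have "\<bar>g x\<bar> * f x \<le> (1 + g x * g x) * f x"
      using assms(4) by (rule mult_right_mono)
    moreover have "0 \<le> g x * g x * f x"
      using assms(4) by simp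
    ultimately show ?thesis
      using assms(4) by (simp add: abs_mult distrib_right)
  qed
  then show "AE x in M. norm (g x * f x) \<le> norm (f x + g x * g x * f x)"
    by simp
qed (use assms(1) in simp)

lemma norm_affine_square_le:
  fixes A :: "real^'n^'m"
  assumes "\<nu> > 0"
  obtains L where "\<And>y. norm (c + A *v y) ^ 2 \<le> L * (1 + (y \<bullet> y) / \<nu>)"
proof -
  obtain K where K: "\<And>y. norm (A *v y) \<le> norm y * K"
    using bounded_linear.bounded[OF matrix_vector_mul_bounded_linear] by blast
  have "norm (c + A *v y) ^ 2 \<le> (2 * norm c ^ 2 + 2 * K^2 * \<nu>) * (1 + (y \<bullet> y) / \<nu>)" for y
  proof -
    have "norm (c + A *v y) \<le> norm c + \<bar>K\<bar> * norm y"
      using norm_triangle_ineq[of c "A *v y"] K[of y] abs_ge_self[of K]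
      by (smt (verit) mult.commute mult_left_mono norm_ge_zero)
    then have "norm (c + A *v y) ^ 2 \<le> (norm c + \<bar>K\<bar> * norm y) ^ 2"
      by (simp add: power_mono)
    also have "\<dots> \<le> 2 * norm c ^ 2 + 2 * (\<bar>K\<bar> * norm y) ^ 2"
      using power2_sum[of "norm c" "\<bar>K\<bar> * norm y"] power2_diff[of "norm c" "\<bar>K\<bar> * norm y"]
        zero_le_power2[of "norm c - \<bar>K\<bar> * norm y"]
      by linarith
    also have "\<dots> = 2 * norm c ^ 2 + 2 * K^2 * (y \<bullet> y)"
      by (simp add: power_mult_distrib power2_norm_eq_inner)
    also have "\<dots> \<le> (2 * norm c ^ 2 + 2 * K^2 * \<nu>) * (1 + (y \<bullet> y) / \<nu>)"
      using assms by (simp add: algebra_simps)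
    finally show ?thesis .
  qed
  then show ?thesis
    by (rule that)
qed

lemma abs_mult_components_le_norm_square:
  fixes x :: "real^'n"
  shows "\<bar>x $ i * x $ j\<bar> \<le> norm x ^ 2"
  unfolding abs_mult power2_eq_square
  by (intro mult_mono component_le_norm_cart) simp_all

lemma AE_lborel_inner_neq_0:
  fixes w :: "'a::euclidean_space"
  assumes "w \<noteq> 0"
  shows "AE y in lborel. w \<bullet> y \<noteq> 0"
proof -
  have "negligible {y. w \<bullet> y = 0}"
    using negligible_hyperplane[of w 0] assms by simp
  then have "{y. w \<bullet> y = 0} \<in> null_sets lebesgue"
    using negligible_iff_null_sets by blast
  then have "AE y in lebesgue. y \<notin> {y. w \<bullet> y = 0}"
    by (rule AE_not_in)
  then show ?thesis
    by (simp add: AE_completion_iff)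
qed

lemma square_inner_student_profile_dilation:
  fixes w y :: "'a::real_inner"
  assumes "\<nu> > 0" and "s > 0" and "w \<bullet> y \<noteq> 0"
  shows "2 powr (2 - 2 * s) * ((w \<bullet> y)^2 * (1 + (y \<bullet> y) / \<nu>) powr (-s))
    < (w \<bullet> (2 *\<^sub>R y))^2 * (1 + ((2 *\<^sub>R y) \<bullet> (2 *\<^sub>R y)) / \<nu>) powr (-s)"
proof -
  define t where "t = (y \<bullet> y) / \<nu>"
  have "t \<ge> 0"
    using assms(1) by (simp add: t_def)
  have "4 powr (-s) * (1 + t) powr (-s) = (4 * (1 + t)) powr (-s)"
    using \<open>t \<ge> 0\<close> powr_mult[of 4 "1 + t" "-s"] by simp
  also have "\<dots> < (1 + 4 * t) powr (-s)"
    using assms(2) \<open>t \<ge> 0\<close> by (intro powr_less_mono2_neg) auto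
  finally have "4 * (w \<bullet> y)^2 * (4 powr (-s) * (1 + t) powr (-s)) < 4 * (w \<bullet> y)^2 * (1 + 4 * t) powr (-s)"
    using assms(3) by (intro mult_strict_left_mono) auto
  moreover have "(2::real) powr (2 - 2 * s) = 4 * 4 powr (-s)"
    using powr_powr[of 2 2 "-s"] by (simp add: powr_diff powr_minus divide_inverse)
  ultimately show ?thesis
    by (simp add: t_def power2_eq_square algebra_simps)
qed

text \<open>For f y = (w \<bullet> y)^2 (1 + |y|^2/\<nu>) powr (-s) one has f (2y) > 2 powr (2 - 2s) f y
  off the hyperplane w \<bullet> y = 0, whereas the substitution y \<mapsto> 2y gives
  \<integral> f (2y) = 2^-d \<integral> f \<le> 2 powr (2 - 2s) \<integral> f.\<close>

lemma not_integrable_square_inner_student_profile: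
  fixes w :: "real^'n" and \<nu> s :: real
  assumes w: "w \<noteq> 0" and \<nu>: "\<nu> > 0" and s: "s > 0" and s_le: "2 * s \<le> CARD('n) + 2"
  shows "\<not> integrable lborel (\<lambda>y. (w \<bullet> y)^2 * (1 + (y \<bullet> y) / \<nu>) powr (-s))"
proof
  define f where "f y = (w \<bullet> y)^2 * (1 + (y \<bullet> y) / \<nu>) powr (-s)" for y :: "real^'n"
  have [measurable]: "f \<in> borel_measurable borel"
    unfolding f_def by measurable
  define q where "q = (2::real) powr (2 - 2 * s)"
  assume "integrable lborel (\<lambda>y. (w \<bullet> y)^2 * (1 + (y \<bullet> y) / \<nu>) powr (-s))"
  then have f_int: "integrable lborel f"
    by (simp add: f_def[abs_def])
  then have f2_int: "integrable lborel (\<lambda>y. f (2 *\<^sub>R y))"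
    by (simp add: lborel_integrable_scaleR_iff)
  from AE_lborel_inner_neq_0[OF w] have "AE y in lborel. f (2 *\<^sub>R y) - q * f y > 0"
  proof eventually_elim
    case (elim y)
    show ?case
      using square_inner_student_profile_dilation[OF \<nu> s elim] unfolding f_def q_def by linarith
  qed
  then have "integral\<^sup>L lborel (\<lambda>y. f (2 *\<^sub>R y) - q * f y) > 0"
    using f_int f2_int by (intro integral_pos_AE) simp_all
  moreover have "integral\<^sup>L lborel (\<lambda>y. f (2 *\<^sub>R y) - q * f y) = (1 / 2 ^ CARD('n) - q) * integral\<^sup>L lborel f"
    using f_int f2_int lborel_integral_scaleR[of 2 f] by (simp add: algebra_simps)
  moreover have "1 / (2::real) ^ CARD('n) \<le> q"
  proof -
    have "1 / (2::real) ^ CARD('n) = 2 powr (- real CARD('n))"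
      by (simp add: powr_minus powr_realpow divide_inverse)
    also have "\<dots> \<le> q"
      unfolding q_def using s_le by (intro powr_mono) auto
    finally show ?thesis .
  qed
  moreover have "integral\<^sup>L lborel f \<ge> 0"
    by (simp add: f_def)
  ultimately show False
    using mult_nonpos_nonneg[of "1 / 2 ^ CARD('n) - q" "integral\<^sup>L lborel f"] by linarith
qed

section \<open>Student kernels\<close>

lemma student_kernel_measurable [measurable]:
  "student_kernel \<nu> \<mu> S \<in> borel_measurable borel"
  unfolding student_kernel_def[abs_def] by measurable

lemma student_kernel_pos:
  assumes "pos_def_sym S" and "\<nu> > 0"
  shows "student_kernel \<nu> \<mu> S x > 0"
proof -
  have "(x - \<mu>) \<bullet> (matrix_inv S *v (x - \<mu>)) \<ge> 0"
    using pos_def_sym_matrix_inv[OF assms(1)] unfolding pos_def_sym_def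
    by (cases "x = \<mu>") (auto simp: less_imp_le)
  then have "1 + (1 / \<nu>) * ((x - \<mu>) \<bullet> (matrix_inv S *v (x - \<mu>))) > 0"
    using assms(2) by (simp add: add_pos_nonneg)
  then show ?thesis
    by (simp add: student_kernel_def)
qed

lemma student_kernel_whitened:
  fixes U S :: "real^'n^'n"
  assumes "\<And>y. (U *v y) \<bullet> (matrix_inv S *v (U *v y)) = y \<bullet> y"
  shows "student_kernel \<nu> \<mu> S (\<mu> + U *v y) = (1 + (y \<bullet> y) / \<nu>) powr (-(\<nu> + CARD('n)) / 2)"
  using assms by (simp add: student_kernel_def)

lemma student_kernel_mat_1:
  "student_kernel \<nu> 0 (mat 1) y = (1 + (y \<bullet> y) / \<nu>) powr (-(\<nu> + CARD('n)) / 2)"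
  for y :: "real^'n"
proof -
  have "matrix_inv (mat 1 :: real^'n^'n) = mat 1"
    by (rule matrix_inv_unique) simp_all
  then show ?thesis
    by (simp add: student_kernel_def)
qed

lemma
  fixes S :: "real^'n^'n"
  assumes S: "pos_def_sym S" and \<nu>: "\<nu> > 0"
  shows integrable_student_kernel: "integrable lborel (student_kernel \<nu> \<mu> S)"
    and integral_student_kernel: "integral\<^sup>L lborel (student_kernel \<nu> \<mu> S)
      = sqrt (det S) * integral\<^sup>L lborel (student_kernel \<nu> 0 (mat 1) :: real^'n \<Rightarrow> real)"
proof -
  obtain U where "det U \<noteq> 0" and "det U ^ 2 = det S"
    and form: "\<And>y. (U *v y) \<bullet> (matrix_inv S *v (U *v y)) = y \<bullet> y"
    using pos_def_sym_whitening[OF S] by metis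
  have substituted: "(\<lambda>y. student_kernel \<nu> \<mu> S (\<mu> + U *v y)) = student_kernel \<nu> 0 (mat 1)"
    using student_kernel_whitened[OF form] by (simp add: student_kernel_mat_1 fun_eq_iff)
  have "(\<nu> + CARD('n)) / 2 > DIM(real^'n) / 2"
    using \<nu> by (simp add: field_simps)
  from integrable_student_profile[OF \<nu> this]
  have "integrable lborel (student_kernel \<nu> 0 (mat 1) :: real^'n \<Rightarrow> real)"
    by (simp add: student_kernel_mat_1[abs_def] minus_divide_left)
  then show "integrable lborel (student_kernel \<nu> \<mu> S)"
    using lborel_integrable_matrix_affine_iff[OF \<open>det U \<noteq> 0\<close>, of "student_kernel \<nu> \<mu> S" \<mu>]
    by (simp add: substituted)
  have "\<bar>det U\<bar> = sqrt (det S)"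
    using \<open>det U ^ 2 = det S\<close> by (metis real_sqrt_abs)
  then show "integral\<^sup>L lborel (student_kernel \<nu> \<mu> S)
      = sqrt (det S) * integral\<^sup>L lborel (student_kernel \<nu> 0 (mat 1) :: real^'n \<Rightarrow> real)"
    using lborel_integral_matrix_affine[OF \<open>det U \<noteq> 0\<close>, of "student_kernel \<nu> \<mu> S" \<mu>]
    by (simp add: substituted)
qed

lemma student_normaliser_pos:
  assumes "\<nu> > 0"
  shows "integral\<^sup>L lborel (student_kernel \<nu> 0 (mat 1) :: real^'n \<Rightarrow> real) > 0"
proof -
  have "pos_def_sym (mat 1 :: real^'n^'n)"
    by (simp add: pos_def_sym_def)
  then show ?thesis
    using assms integrable_student_kernel student_kernel_pos
    by (intro integral_pos_AE AE_I2) auto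
qed

lemma student_density_pos:
  assumes "pos_def_sym S" and "\<nu> > 0"
  shows "student_density \<nu> \<mu> S x > 0"
  using student_normaliser_pos[OF assms(2)] student_kernel_pos[OF assms] pos_def_sym_det_pos[OF assms(1)]
  unfolding student_density_def by (intro mult_pos_pos) auto

lemma student_second_moment_whitened_le:
  fixes U S :: "real^'n^'n"
  assumes form: "\<And>y. (U *v y) \<bullet> (matrix_inv S *v (U *v y)) = y \<bullet> y" and "\<nu> > 0"
    and L: "norm (\<mu> + U *v y) ^ 2 \<le> L * (1 + (y \<bullet> y) / \<nu>)"
  shows "\<bar>(\<mu> + U *v y) $ i * (\<mu> + U *v y) $ j * student_kernel \<nu> \<mu> S (\<mu> + U *v y)\<bar>
    \<le> L * (1 + (y \<bullet> y) / \<nu>) powr (-((\<nu> + CARD('n)) / 2 - 1))"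
proof -
  define t where "t = (y \<bullet> y) / \<nu>"
  have "t \<ge> 0"
    using \<open>\<nu> > 0\<close> by (simp add: t_def)
  have "\<bar>(\<mu> + U *v y) $ i * (\<mu> + U *v y) $ j * student_kernel \<nu> \<mu> S (\<mu> + U *v y)\<bar>
      = \<bar>(\<mu> + U *v y) $ i * (\<mu> + U *v y) $ j\<bar> * (1 + t) powr (-(\<nu> + CARD('n)) / 2)"
    by (simp add: student_kernel_whitened[OF form] t_def abs_mult)
  also have "\<dots> \<le> L * (1 + t) * (1 + t) powr (-(\<nu> + CARD('n)) / 2)"
    using order.trans[OF abs_mult_components_le_norm_square L] unfolding t_def
    by (rule mult_right_mono) simp
  also have "\<dots> = L * (1 + t) powr (-((\<nu> + CARD('n)) / 2 - 1))"
  proof -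
    have "-((\<nu> + CARD('n)) / 2 - 1) = 1 + (-(\<nu> + CARD('n)) / 2)"
      by (simp add: field_simps)
    then have "(1 + t) powr (-((\<nu> + CARD('n)) / 2 - 1)) = (1 + t) * (1 + t) powr (-(\<nu> + CARD('n)) / 2)"
      using \<open>t \<ge> 0\<close> by (simp only:) (simp add: powr_add)
    then show ?thesis
      by simp
  qed
  finally show ?thesis
    by (simp add: t_def)
qed

lemma student_kernel_second_moment_integrable:
  fixes S :: "real^'n^'n"
  assumes S: "pos_def_sym S" and \<nu>: "\<nu> > 2"
  shows "integrable lborel (\<lambda>x. x $ i * x $ j * student_kernel \<nu> \<mu> S x)"
proof -
  obtain U where "det U \<noteq> 0" and form: "\<And>y. (U *v y) \<bullet> (matrix_inv S *v (U *v y)) = y \<bullet> y"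
    using pos_def_sym_whitening[OF S] by metis
  obtain L where L: "\<And>y. norm (\<mu> + U *v y) ^ 2 \<le> L * (1 + (y \<bullet> y) / \<nu>)"
    using norm_affine_square_le[of \<nu>] \<nu> by (metis less_trans zero_less_numeral)
  have "(\<nu> + CARD('n)) / 2 - 1 > DIM(real^'n) / 2"
    using \<nu> by (simp add: field_simps)
  then have "integrable lborel (\<lambda>y::real^'n. (1 + (y \<bullet> y) / \<nu>) powr (-((\<nu> + CARD('n)) / 2 - 1)))"
    using \<nu> by (intro integrable_student_profile) auto
  then have majorant: "integrable lborel
      (\<lambda>y::real^'n. L * (1 + (y \<bullet> y) / \<nu>) powr (-((\<nu> + CARD('n)) / 2 - 1)))"
    by simp
  have "\<nu> > 0"
    using \<nu> by simp
  have "integrable lborel (\<lambda>y. (\<mu> + U *v y) $ i * (\<mu> + U *v y) $ j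
      * student_kernel \<nu> \<mu> S (\<mu> + U *v y))"
  proof (rule Bochner_Integration.integrable_bound[OF majorant])
    show "AE y in lborel. norm ((\<mu> + U *v y) $ i * (\<mu> + U *v y) $ j * student_kernel \<nu> \<mu> S (\<mu> + U *v y))
        \<le> norm (L * (1 + (y \<bullet> y) / \<nu>) powr (-((\<nu> + CARD('n)) / 2 - 1)))"
      using student_second_moment_whitened_le[OF form \<open>\<nu> > 0\<close> L]
      by (intro AE_I2) (simp only: real_norm_def order.trans[OF _ abs_ge_self])
  qed measurable
  then show ?thesis
    using lborel_integrable_matrix_affine_iff[OF \<open>det U \<noteq> 0\<close>,
        of "\<lambda>x. x $ i * x $ j * student_kernel \<nu> \<mu> S x" \<mu>]
    by simp
qed

lemma student_kernel_second_moment_not_integrable: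
  fixes S :: "real^'n^'n"
  assumes S: "pos_def_sym S" and \<nu>: "\<nu> > 0" "\<nu> \<le> 2"
  shows "\<not> integrable lborel (\<lambda>x. x $ i * x $ i * student_kernel \<nu> \<mu> S x)"
proof
  assume second: "integrable lborel (\<lambda>x. x $ i * x $ i * student_kernel \<nu> \<mu> S x)"
  obtain U where "det U \<noteq> 0" and form: "\<And>y. (U *v y) \<bullet> (matrix_inv S *v (U *v y)) = y \<bullet> y"
    using pos_def_sym_whitening[OF S] by metis
  have kernel: "integrable lborel (student_kernel \<nu> \<mu> S)"
    using integrable_student_kernel[OF S \<nu>(1)] .
  have first: "integrable lborel (\<lambda>x. x $ i * student_kernel \<nu> \<mu> S x)"
    using integrable_first_moment[OF kernel second] student_kernel_pos[OF S \<nu>(1)]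
    by (simp add: less_imp_le)
  define G where "G x = (x $ i - \<mu> $ i)^2 * student_kernel \<nu> \<mu> S x" for x
  have "G = (\<lambda>x. x $ i * x $ i * student_kernel \<nu> \<mu> S x
      - (2 * \<mu> $ i) * (x $ i * student_kernel \<nu> \<mu> S x) + (\<mu> $ i)^2 * student_kernel \<nu> \<mu> S x)"
    by (simp add: G_def fun_eq_iff power2_eq_square algebra_simps)
  then have "integrable lborel G"
    using second first kernel by simp
  then have "integrable lborel (\<lambda>y. G (\<mu> + U *v y))"
    using lborel_integrable_matrix_affine_iff[OF \<open>det U \<noteq> 0\<close>, of G \<mu>] by (simp add: G_def)
  moreover have "G (\<mu> + U *v y)
      = (row i U \<bullet> y)^2 * (1 + (y \<bullet> y) / \<nu>) powr (-((\<nu> + CARD('n)) / 2))" for y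
  proof -
    have "(U *v y) $ i = row i U \<bullet> y"
      by (simp add: matrix_vector_mult_def row_def inner_vec_def mult.commute)
    then show ?thesis
      by (simp add: G_def student_kernel_whitened[OF form] minus_divide_left)
  qed
  moreover have "row i U \<noteq> 0"
    using \<open>det U \<noteq> 0\<close> det_zero_row(1)[of i U] by auto
  ultimately show False
    using not_integrable_square_inner_student_profile[of "row i U" \<nu> "(\<nu> + CARD('n)) / 2"] \<nu>
    by simp
qed

lemma student_kernel_second_moments_integrable_iff:
  fixes S :: "real^'n^'n"
  assumes "pos_def_sym S" and "\<nu> > 0"
  shows "(\<forall>i j. integrable lborel (\<lambda>x. x $ i * x $ j * student_kernel \<nu> \<mu> S x)) \<longleftrightarrow> \<nu> > 2"
  using student_kernel_second_moment_integrable[OF assms(1)]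
    student_kernel_second_moment_not_integrable[OF assms] by (meson not_less)

section \<open>Escorts and compatibility\<close>

lemma student_kernel_powr:
  fixes S :: "real^'n^'n" and \<nu> \<nu>' a :: real
  assumes S: "pos_def_sym S" and "\<nu> > 0" and "\<nu>' > 0"
    and dof: "\<nu>' + CARD('n) = a * (\<nu> + CARD('n))"
  shows "student_kernel \<nu> \<mu> S x powr a = student_kernel \<nu>' \<mu> ((\<nu> / \<nu>') *\<^sub>R S) x"
proof -
  define Q where "Q = (x - \<mu>) \<bullet> (matrix_inv S *v (x - \<mu>))"
  have "matrix_inv ((\<nu> / \<nu>') *\<^sub>R S) = (\<nu>' / \<nu>) *\<^sub>R matrix_inv S"
    using matrix_inv_scaleR[OF S, of "\<nu> / \<nu>'"] assms(2,3) by simp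
  then have "student_kernel \<nu>' \<mu> ((\<nu> / \<nu>') *\<^sub>R S) x
      = (1 + Q / \<nu>) powr (-(\<nu> + CARD('n)) / 2 * a)"
    using assms(2,3) dof
    by (simp add: student_kernel_def Q_def scaleR_matrix_vector_assoc[symmetric] field_simps)
  also have "\<dots> = student_kernel \<nu> \<mu> S x powr a"
    by (simp add: student_kernel_def Q_def powr_powr)
  finally show ?thesis ..
qed

lemma student_density_powr:
  fixes S :: "real^'n^'n" and \<nu> \<nu>' a :: real
  assumes S: "pos_def_sym S" and \<nu>: "\<nu> > 0" and "\<nu>' > 0"
    and dof: "\<nu>' + CARD('n) = a * (\<nu> + CARD('n))"
  shows "\<exists>C>0. \<forall>x. student_density \<nu> \<mu> S x powr a = C * student_kernel \<nu>' \<mu> ((\<nu> / \<nu>') *\<^sub>R S) x"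
proof -
  define C where "C = 1 / integral\<^sup>L lborel (student_kernel \<nu> 0 (mat 1) :: real^'n \<Rightarrow> real)
    * det S powr (-1/2)"
  have "C > 0"
    using student_normaliser_pos[OF \<nu>, where 'n='n] pos_def_sym_det_pos[OF S] by (simp add: C_def)
  have powr: "student_density \<nu> \<mu> S x powr a = C powr a * student_kernel \<nu>' \<mu> ((\<nu> / \<nu>') *\<^sub>R S) x"
    for x
  proof -
    have "student_density \<nu> \<mu> S x = C * student_kernel \<nu> \<mu> S x"
      by (simp add: student_density_def C_def)
    moreover have "student_kernel \<nu> \<mu> S x \<ge> 0"
      using student_kernel_pos[OF S \<nu>] by (rule less_imp_le)
    ultimately show ?thesis
      using \<open>C > 0\<close> by (simp add: powr_mult student_kernel_powr[OF assms])
  qed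
  have "C powr a > 0"
    using \<open>C > 0\<close> by simp
  with powr show ?thesis
    by blast
qed

lemma escort_student_density:
  fixes S :: "real^'n^'n" and \<nu> \<nu>' a :: real
  assumes S: "pos_def_sym S" and \<nu>: "\<nu> > 0" and \<nu>': "\<nu>' > 0"
    and dof: "\<nu>' + CARD('n) = a * (\<nu> + CARD('n))"
  shows "escort a (student_density \<nu> \<mu> S) = student_density \<nu>' \<mu> ((\<nu> / \<nu>') *\<^sub>R S)"
proof
  fix x
  obtain C where "C > 0"
    and powr: "\<And>x. student_density \<nu> \<mu> S x powr a = C * student_kernel \<nu>' \<mu> ((\<nu> / \<nu>') *\<^sub>R S) x"
    using student_density_powr[OF assms] by blast
  have S': "pos_def_sym ((\<nu> / \<nu>') *\<^sub>R S)"
    using pos_def_sym_scaleR[OF S] \<nu> \<nu>' by simp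
  have "det ((\<nu> / \<nu>') *\<^sub>R S) powr (1/2) = sqrt (det ((\<nu> / \<nu>') *\<^sub>R S))"
    using pos_def_sym_det_pos[OF S'] by (intro powr_half_sqrt) simp
  then have "det ((\<nu> / \<nu>') *\<^sub>R S) powr (-1/2) = 1 / sqrt (det ((\<nu> / \<nu>') *\<^sub>R S))"
    using powr_minus[of "det ((\<nu> / \<nu>') *\<^sub>R S)" "1/2"] by (simp add: inverse_eq_divide)
  let ?k = "student_kernel \<nu>' \<mu> ((\<nu> / \<nu>') *\<^sub>R S)"
  have "escort a (student_density \<nu> \<mu> S) x = C * ?k x / (C * integral\<^sup>L lborel ?k)"
    by (simp add: escort_def powr)
  also have "\<dots> = ?k x / integral\<^sup>L lborel ?k"
    using \<open>C > 0\<close> by simp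
  also have "\<dots> = student_density \<nu>' \<mu> ((\<nu> / \<nu>') *\<^sub>R S) x"
    using \<open>det ((\<nu> / \<nu>') *\<^sub>R S) powr (-1/2) = 1 / sqrt (det ((\<nu> / \<nu>') *\<^sub>R S))\<close>
    by (simp add: integral_student_kernel[OF S' \<nu>'] student_density_def)
  finally show "escort a (student_density \<nu> \<mu> S) x = student_density \<nu>' \<mu> ((\<nu> / \<nu>') *\<^sub>R S) x" .
qed

lemma student_compatible_iff:
  fixes \<nu> :: real
  assumes "\<nu> > 0"
  shows "student_compatible \<nu> p \<longleftrightarrow>
    (let \<alpha> = student_alpha \<nu> CARD('n)
     in integrable lborel (\<lambda>x. p x powr \<alpha>)
        \<and> integral\<^sup>L lborel (\<lambda>x. p x powr \<alpha>) > 0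
        \<and> (\<forall>i. integrable lborel (\<lambda>x::real^'n. x $ i * p x powr \<alpha>))
        \<and> (\<forall>i j. integrable lborel (\<lambda>x. x $ i * x $ j * p x powr \<alpha>)))"
proof -
  have "{x. student_density \<nu> \<mu> S x > 0} = UNIV" if "pos_def_sym S" for \<mu> :: "real^'n" and S
    using student_density_pos[OF that assms] by blast
  moreover have "pos_def_sym (mat 1 :: real^'n^'n)"
    by (simp add: pos_def_sym_def)
  ultimately show ?thesis
    unfolding student_compatible_def Let_def by auto
qed

lemma student_compatible_student_density_iff:
  fixes S :: "real^'n^'n" and \<nu>p \<nu> \<nu>' :: real
  assumes S: "pos_def_sym S" and \<nu>p: "\<nu>p > 0" and \<nu>: "\<nu> > 0" and \<nu>': "\<nu>' > 0"
    and dof: "\<nu>' + CARD('n) = student_alpha \<nu> CARD('n) * (\<nu>p + CARD('n))"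
  shows "student_compatible \<nu> (student_density \<nu>p \<mu> S) \<longleftrightarrow> \<nu>' > 2"
proof -
  define \<alpha> where "\<alpha> = student_alpha \<nu> CARD('n)"
  define k where "k = student_kernel \<nu>' \<mu> ((\<nu>p / \<nu>') *\<^sub>R S)"
  obtain C where "C > 0" and powr: "\<And>x. student_density \<nu>p \<mu> S x powr \<alpha> = C * k x"
    using student_density_powr[OF S \<nu>p \<nu>' dof[folded \<alpha>_def]] unfolding k_def by blast
  have S': "pos_def_sym ((\<nu>p / \<nu>') *\<^sub>R S)"
    using pos_def_sym_scaleR[OF S] \<nu>p \<nu>' by simp
  have k_pos: "k x > 0" for x
    using student_kernel_pos[OF S' \<nu>'] by (simp add: k_def)
  have k: "integrable lborel k" "integral\<^sup>L lborel k > 0" "\<And>x. k x \<ge> 0"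
    using integrable_student_kernel[OF S' \<nu>'] integral_student_kernel[OF S' \<nu>']
      student_normaliser_pos[OF \<nu>', where 'n='n] pos_def_sym_det_pos[OF S'] k_pos
    by (simp_all add: k_def order.strict_implies_order)
  have scale: "integrable lborel (\<lambda>x. g x * (C * k x)) \<longleftrightarrow> integrable lborel (\<lambda>x. g x * k x)"
    for g :: "real^'n \<Rightarrow> real"
    using \<open>C > 0\<close> integrable_mult_left_iff[of lborel C "\<lambda>x. g x * k x"]
    by (simp add: mult.left_commute)
  have first: "integrable lborel (\<lambda>x. x $ i * k x)"
    if "\<forall>i j. integrable lborel (\<lambda>x. x $ i * x $ j * k x)" for i
  proof (rule integrable_first_moment[OF k(1) _ _ k(3)])
    show "integrable lborel (\<lambda>x. x $ i * x $ i * k x)"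
      using that by blast
  qed measurable
  have "student_compatible \<nu> (student_density \<nu>p \<mu> S)
      \<longleftrightarrow> integrable lborel (\<lambda>x. C * k x) \<and> integral\<^sup>L lborel (\<lambda>x. C * k x) > 0
        \<and> (\<forall>i. integrable lborel (\<lambda>x. x $ i * (C * k x)))
        \<and> (\<forall>i j. integrable lborel (\<lambda>x. x $ i * x $ j * (C * k x)))"
    by (simp only: student_compatible_iff[OF \<nu>] Let_def \<alpha>_def[symmetric] powr)
  also have "\<dots> \<longleftrightarrow> (\<forall>i j. integrable lborel (\<lambda>x. x $ i * x $ j * k x))"
    using k(1,2) \<open>C > 0\<close> first by (simp add: scale) blast
  also have "\<dots> \<longleftrightarrow> \<nu>' > 2"
    unfolding k_def by (rule student_kernel_second_moments_integrable_iff[OF S' \<nu>'])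
  finally show ?thesis .
qed

theorem proposition4:
  fixes \<nu>p \<nu> :: real and \<mu>p :: "real^'n" and \<Sigma>p :: "real^'n^'n"
    and p :: "real^'n \<Rightarrow> real"
  assumes "\<nu>p > 0" and "\<nu> > 0" and "pos_def_sym \<Sigma>p"
    and "p = student_density \<nu>p \<mu>p \<Sigma>p"
  defines "d \<equiv> real CARD('n)"
  defines "\<nu>\<alpha> \<equiv> \<nu>p + 2 * (\<nu>p + d) / (\<nu> + d)"
  shows "(student_compatible \<nu> p \<longleftrightarrow> \<nu>\<alpha> > 2)
    \<and> escort (student_alpha \<nu> CARD('n)) p
        = student_density \<nu>\<alpha> \<mu>p ((\<nu>p / \<nu>\<alpha>) *\<^sub>R \<Sigma>p)"
proof -
  have "d > 0"
    by (simp add: d_def)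
  then have "2 * (\<nu>p + d) / (\<nu> + d) > 0"
    using assms(1,2) by simp
  then have "\<nu>\<alpha> > 0"
    using assms(1) unfolding \<nu>\<alpha>_def by linarith
  have dof: "\<nu>\<alpha> + CARD('n) = student_alpha \<nu> CARD('n) * (\<nu>p + CARD('n))"
    using assms(2) \<open>d > 0\<close> by (simp add: \<nu>\<alpha>_def student_alpha_def d_def field_simps)
  show ?thesis
    using student_compatible_student_density_iff[OF assms(3,1,2) \<open>\<nu>\<alpha> > 0\<close> dof]
      escort_student_density[OF assms(3,1) \<open>\<nu>\<alpha> > 0\<close> dof] assms(4)
    by simp
qed

end
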